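(* Let $i,j\geq 1$ be integers. For $n\geq 0$, let $U(i,j,n)$ be the set of all triples $(L_1,L_2,L_3)$ of walks of length $n$ with steps $(1,1)$ and $(1,-1)$, where $L_1$ starts at $(0,0)$, $L_2$ starts at $(0,2i)$ and $L_3$ starts at $(0,2i+2j)$. Let $V(i,j,n)$ be the set of triples in $U(i,j,n)$ whose three walks are pairwise nonintersecting, and for $\{a,b\}\in\{\{1,2\},\{2,3\},\{1,3\}\}$ let $W_{ab}(n)$ be the set of triples in $U(i,j,n)$ such that $L_a$ and $L_b$ do not intersect. Define $V_{i,j}(t)=\sum_{n\geq 0}|V(i,j,n)|t^n$ and $W_{ab}(t)=\sum_{n\geq0}|W_{ab}(n)|t^n$. Then $$V_{i,j}(t)=W_{12}(t)+W_{23}(t)-W_{13}(t).$$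
   Context: Two walks intersect if they share a common lattice point; otherwise they are nonintersecting. *)

theory Defs
  imports "HOL-Computational_Algebra.Formal_Power_Series"
begin

definition lattice_walk :: "int \<times> int \<Rightarrow> nat \<Rightarrow> (int \<times> int) list \<Rightarrow> bool" where
  "lattice_walk st n L \<longleftrightarrow> length L = Suc n \<and> L ! 0 = st \<and>
     (\<forall>k<n. fst (L ! Suc k) = fst (L ! k) + 1 \<and>
             (snd (L ! Suc k) = snd (L ! k) + 1 \<or> snd (L ! Suc k) = snd (L ! k) - 1))"

definition nonintersecting :: "(int \<times> int) list \<Rightarrow> (int \<times> int) list \<Rightarrow> bool" where
  "nonintersecting L L' \<longleftrightarrow> set L \<inter> set L' = {}"

type_synonym triple = "(int \<times> int) list \<times> (int \<times> int) list \<times> (int \<times> int) list"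

definition U :: "nat \<Rightarrow> nat \<Rightarrow> nat \<Rightarrow> triple set" where
  "U i j n = {(L1, L2, L3). lattice_walk (0, 0) n L1 \<and> lattice_walk (0, 2 * int i) n L2
                           \<and> lattice_walk (0, 2 * int i + 2 * int j) n L3}"

definition V :: "nat \<Rightarrow> nat \<Rightarrow> nat \<Rightarrow> triple set" where
  "V i j n = {(L1, L2, L3) \<in> U i j n. nonintersecting L1 L2 \<and> nonintersecting L2 L3
                                      \<and> nonintersecting L1 L3}"

definition W12 :: "nat \<Rightarrow> nat \<Rightarrow> nat \<Rightarrow> triple set" where
  "W12 i j n = {(L1, L2, L3) \<in> U i j n. nonintersecting L1 L2}"

definition W23 :: "nat \<Rightarrow> nat \<Rightarrow> nat \<Rightarrow> triple set" where
  "W23 i j n = {(L1, L2, L3) \<in> U i j n. nonintersecting L2 L3}"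

definition W13 :: "nat \<Rightarrow> nat \<Rightarrow> nat \<Rightarrow> triple set" where
  "W13 i j n = {(L1, L2, L3) \<in> U i j n. nonintersecting L1 L3}"

definition gf :: "(nat \<Rightarrow> 'a set) \<Rightarrow> int fps" where
  "gf S = Abs_fps (\<lambda>n. int (card (S n)))"

end

theory Submission
  imports Defs
begin

text \<open>Two walks whose starting heights have the same parity can only change their vertical
  order by meeting, so the middle walk L2 meets L1 or L3 no later than L1 meets L3. Hence V is the
  set of triples in which neither L1,L2 nor L2,L3 meet, and by inclusion-exclusion the identity
  reduces to: the triples where L1,L2 and L2,L3 both meet are as many as those where L1,L3 meet.
  Triples where all three pairs meet lie on both sides. Exchanging the tails of L1 and L2 after
  their first meeting point is an involution that matches the triples where L1,L3 never meet and
  L1,L2 meet first with those where L1,L3 meet but L2,L3 never do; the same construction with the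
  roles of L1 and L3 exchanged handles the rest.\<close>

definition walks :: "int \<times> int \<Rightarrow> nat \<Rightarrow> (int \<times> int) list set" where
  "walks st n = {L. lattice_walk st n L}"

lemma lattice_walk_length: "lattice_walk st n L \<Longrightarrow> length L = Suc n"
  by (simp add: lattice_walk_def)

lemma lattice_walk_step:
  "lattice_walk st n L \<Longrightarrow> k < n \<Longrightarrow> \<bar>snd (L ! Suc k) - snd (L ! k)\<bar> = 1"
  unfolding lattice_walk_def by auto

lemma lattice_walk_fst:
  assumes "lattice_walk (x, y) n L" "k \<le> n"
  shows "fst (L ! k) = x + int k"
  using assms(2)
proof (induction k)
  case 0
  then show ?case using assms(1) by (simp add: lattice_walk_def)
next
  case (Suc k)
  then show ?case using assms(1) unfolding lattice_walk_def by force
qed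

lemma lattice_walk_snd_parity:
  assumes "lattice_walk (x, y) n L" "k \<le> n"
  shows "even (snd (L ! k) - y - int k)"
  using assms(2)
proof (induction k)
  case 0
  then show ?case using assms(1) by (simp add: lattice_walk_def)
next
  case (Suc k)
  have "\<bar>snd (L ! Suc k) - snd (L ! k)\<bar> = 1"
    using lattice_walk_step[OF assms(1)] Suc.prems by simp
  then have "snd (L ! Suc k) - y - int (Suc k) = snd (L ! k) - y - int k \<or>
      snd (L ! Suc k) - y - int (Suc k) = snd (L ! k) - y - int k - 2"
    by auto
  with Suc show ?case by (elim disjE) (simp_all only:, simp)
qed

lemma lattice_walk_snd_bound:
  assumes "lattice_walk (x, y) n L" "k \<le> n"
  shows "\<bar>snd (L ! k) - y\<bar> \<le> int k"
  using assms(2)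
proof (induction k)
  case 0
  then show ?case using assms(1) by (simp add: lattice_walk_def)
next
  case (Suc k)
  then show ?case using lattice_walk_step[OF assms(1), of k] by auto
qed

lemma finite_walks: "finite (walks (x, y) n)"
proof (rule finite_subset)
  let ?box = "{x..x + int n} \<times> {y - int n..y + int n}"
  show "walks (x, y) n \<subseteq> {L. set L \<subseteq> ?box \<and> length L = Suc n}"
  proof
    fix L assume "L \<in> walks (x, y) n"
    then have L: "lattice_walk (x, y) n L" by (simp add: walks_def)
    have "set L \<subseteq> ?box"
    proof
      fix p assume "p \<in> set L"
      then obtain k where "k \<le> n" "p = L ! k"
        using lattice_walk_length[OF L] by (auto simp: in_set_conv_nth less_Suc_eq_le)
      with lattice_walk_fst[OF L] lattice_walk_snd_bound[OF L] show "p \<in> ?box"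
        by (force simp: mem_Times_iff abs_le_iff)
    qed
    then show "L \<in> {L. set L \<subseteq> ?box \<and> length L = Suc n}"
      using lattice_walk_length[OF L] by simp
  qed
  show "finite {L. set L \<subseteq> ?box \<and> length L = Suc n}"
    by (rule finite_lists_length_eq) simp
qed

lemma U_eq_walks:
  "U i j n = walks (0, 0) n \<times> walks (0, 2 * int i) n \<times> walks (0, 2 * int i + 2 * int j) n"
  by (auto simp: U_def walks_def)

definition meets :: "nat \<Rightarrow> (int \<times> int) list \<Rightarrow> (int \<times> int) list \<Rightarrow> bool" where
  "meets n P Q \<longleftrightarrow> (\<exists>k\<le>n. P ! k = Q ! k)"

lemma meets_sym: "meets n P Q = meets n Q P"
  unfolding meets_def by (auto simp: eq_commute)

lemma nonintersecting_iff_not_meets: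
  assumes P: "lattice_walk (x, y) n P" and Q: "lattice_walk (x, y') n Q"
  shows "nonintersecting P Q \<longleftrightarrow> \<not> meets n P Q"
proof -
  have len: "length P = Suc n" "length Q = Suc n"
    using P Q by (simp_all add: lattice_walk_length)
  have "set P \<inter> set Q \<noteq> {} \<longleftrightarrow> meets n P Q"
  proof
    assume "set P \<inter> set Q \<noteq> {}"
    then obtain p where "p \<in> set P" "p \<in> set Q" by blast
    then obtain k k' where k: "k < Suc n" "k' < Suc n" "P ! k = Q ! k'"
      using len by (metis in_set_conv_nth)
    moreover have "k = k'"
      using k lattice_walk_fst[OF P, of k] lattice_walk_fst[OF Q, of k'] by simp
    ultimately show "meets n P Q" unfolding meets_def by (auto simp: less_Suc_eq_le)
  next
    assume "meets n P Q"
    then show "set P \<inter> set Q \<noteq> {}"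
      unfolding meets_def using len by (metis disjoint_iff le_imp_less_Suc nth_mem)
  qed
  then show ?thesis unfolding nonintersecting_def by blast
qed

lemma even_steps_zero_crossing:
  fixes d :: "nat \<Rightarrow> int"
  assumes "d 0 < 0" "0 \<le> d c"
    and "\<And>k. k < c \<Longrightarrow> \<bar>d (Suc k) - d k\<bar> \<le> 2" and "\<And>k. k \<le> c \<Longrightarrow> even (d k)"
  shows "\<exists>k\<le>c. d k = 0"
  using assms
proof (induction c)
  case 0
  then show ?case by simp
next
  case (Suc c)
  show ?case
  proof (cases "d (Suc c) = 0")
    case True
    then show ?thesis by blast
  next
    case False
    with Suc.prems(2) Suc.prems(4)[of "Suc c"] have "d (Suc c) \<ge> 2" by presburger
    with Suc.prems(3)[of c] have "0 \<le> d c" by simp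
    with Suc show ?thesis by (metis le_Suc_eq less_Suc_eq)
  qed
qed

lemma walks_cross:
  assumes P: "lattice_walk (0, p) n P" and Q: "lattice_walk (0, q) n Q"
    and "even p" "even q" "p < q" "c \<le> n" "snd (Q ! c) \<le> snd (P ! c)"
  shows "\<exists>k\<le>c. P ! k = Q ! k"
proof -
  define d where "d k = snd (P ! k) - snd (Q ! k)" for k
  have "\<exists>k\<le>c. d k = 0"
  proof (rule even_steps_zero_crossing)
    show "d 0 < 0" "0 \<le> d c"
      using P Q assms(5,7) by (simp_all add: d_def lattice_walk_def)
    show "\<bar>d (Suc k) - d k\<bar> \<le> 2" if "k < c" for k
      using that assms(6) lattice_walk_step[OF P, of k] lattice_walk_step[OF Q, of k]
      unfolding d_def by linarith
    show "even (d k)" if "k \<le> c" for k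
    proof -
      have "even ((snd (P ! k) - p - int k) - (snd (Q ! k) - q - int k) + p - q)"
        using that assms(3,4,6) lattice_walk_snd_parity[OF P, of k] lattice_walk_snd_parity[OF Q, of k]
        by simp
      then show ?thesis by (simp add: d_def)
    qed
  qed
  then obtain k where "k \<le> c" "d k = 0" by blast
  moreover have "fst (P ! k) = fst (Q ! k)"
    using \<open>k \<le> c\<close> assms(6) lattice_walk_fst[OF P, of k] lattice_walk_fst[OF Q, of k] by simp
  ultimately show ?thesis by (auto simp: d_def prod_eq_iff)
qed

lemma middle_walk_meets:
  assumes P: "lattice_walk (0, p) n P" and Q: "lattice_walk (0, q) n Q"
    and R: "lattice_walk (0, r) n R"
    and "even p" "even q" "even r" "p < q \<and> q < r \<or> r < q \<and> q < p"
    and "c \<le> n" "P ! c = R ! c"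
  shows "(\<exists>k\<le>c. P ! k = Q ! k) \<or> (\<exists>k\<le>c. Q ! k = R ! k)"
proof -
  have ordered: "(\<exists>k\<le>c. A ! k = Q ! k) \<or> (\<exists>k\<le>c. Q ! k = C ! k)"
    if A: "lattice_walk (0, a) n A" and C: "lattice_walk (0, b) n C"
      and "even a" "even b" "a < q" "q < b" "A ! c = C ! c" for a b A C
  proof (cases "snd (Q ! c) \<le> snd (A ! c)")
    case True
    then show ?thesis using walks_cross[OF A Q] that assms(5,8) by blast
  next
    case False
    then have "snd (C ! c) \<le> snd (Q ! c)" using that by simp
    then show ?thesis using walks_cross[OF Q C] that assms(5,8) by (metis eq_commute)
  qed
  from assms(7) show ?thesis
  proof
    assume "p < q \<and> q < r"
    then show ?thesis using ordered[OF P R] assms by blast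
  next
    assume "r < q \<and> q < p"
    then show ?thesis using ordered[OF R P] assms by (metis eq_commute)
  qed
qed

lemma meets_outer_imp_meets_middle:
  assumes P: "lattice_walk (0, p) n P" and Q: "lattice_walk (0, q) n Q"
    and R: "lattice_walk (0, r) n R"
    and "even p" "even q" "even r" "p < q" "q < r" "meets n P R"
  shows "meets n P Q \<or> meets n Q R"
proof -
  obtain c where c: "c \<le> n" "P ! c = R ! c" using assms(9) by (auto simp: meets_def)
  from middle_walk_meets[OF P Q R assms(4-6) _ c] assms(7,8) c(1) show ?thesis
    unfolding meets_def by (meson order_trans)
qed

definition first_meet :: "(int \<times> int) list \<Rightarrow> (int \<times> int) list \<Rightarrow> nat" where
  "first_meet P Q = (LEAST k. P ! k = Q ! k)"

lemma first_meet_sym: "first_meet P Q = first_meet Q P"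
  unfolding first_meet_def by (simp add: eq_commute)

lemma first_meet_le: "P ! k = Q ! k \<Longrightarrow> first_meet P Q \<le> k"
  unfolding first_meet_def by (rule Least_le)

lemma nth_first_meet: "meets n P Q \<Longrightarrow> P ! first_meet P Q = Q ! first_meet P Q"
  unfolding meets_def first_meet_def by (auto intro: LeastI)

lemma first_meet_le_bound: "meets n P Q \<Longrightarrow> first_meet P Q \<le> n"
  unfolding meets_def using first_meet_le order_trans by blast

lemma before_first_meet: "k < first_meet P Q \<Longrightarrow> P ! k \<noteq> Q ! k"
  using first_meet_le leD by blast

lemma first_meet_neq:
  assumes "meets n P Q" "meets n Q R" "\<not> meets n P R"
  shows "first_meet P Q \<noteq> first_meet Q R"
  using nth_first_meet[OF assms(1)] nth_first_meet[OF assms(2)] first_meet_le_bound[OF assms(1)]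
    assms(3) unfolding meets_def by metis

definition splice_at :: "nat \<Rightarrow> 'a list \<Rightarrow> 'a list \<Rightarrow> 'a list" where
  "splice_at a P Q = take a P @ drop a Q"

lemma nth_splice_at:
  "a \<le> length P \<Longrightarrow> a \<le> length Q \<Longrightarrow> splice_at a P Q ! k = (if k < a then P ! k else Q ! k)"
  by (simp add: splice_at_def nth_append min_def)

lemma splice_at_splice_at:
  "a \<le> length P \<Longrightarrow> a \<le> length Q \<Longrightarrow> splice_at a (splice_at a P Q) (splice_at a Q P) = P"
  by (simp add: splice_at_def min_def)

lemma lattice_walk_splice_at:
  assumes P: "lattice_walk st n P" and Q: "lattice_walk st' n Q" and "a \<le> n" "P ! a = Q ! a"
  shows "lattice_walk st n (splice_at a P Q)"
proof -
  have len: "length P = Suc n" "length Q = Suc n"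
    using P Q by (simp_all add: lattice_walk_length)
  then have nth: "splice_at a P Q ! k = (if k < a then P ! k else Q ! k)" for k
    using assms(3) by (simp add: nth_splice_at)
  have "splice_at a P Q ! k = P ! k \<and> splice_at a P Q ! Suc k = P ! Suc k \<or>
        splice_at a P Q ! k = Q ! k \<and> splice_at a P Q ! Suc k = Q ! Suc k" for k
    using assms(4) nth by (cases "Suc k < a"; cases "Suc k = a") auto
  moreover have "length (splice_at a P Q) = Suc n"
    using len assms(3) by (simp add: splice_at_def)
  moreover have "splice_at a P Q ! 0 = st"
    using P assms(4) nth[of 0] by (auto simp: lattice_walk_def)
  ultimately show ?thesis
    using P Q unfolding lattice_walk_def by metis
qed

fun swap_tails :: "triple \<Rightarrow> triple" where
  "swap_tails (P, Q, R) = (splice_at (first_meet P Q) P Q, splice_at (first_meet P Q) Q P, R)"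

lemma first_meet_splice_at:
  assumes "meets n P Q" "length P = Suc n" "length Q = Suc n"
  defines "a \<equiv> first_meet P Q"
  shows "first_meet (splice_at a P Q) (splice_at a Q P) = a"
proof -
  have nth: "splice_at a P Q ! k = (if k < a then P ! k else Q ! k)"
            "splice_at a Q P ! k = (if k < a then Q ! k else P ! k)" for k
    using assms first_meet_le_bound[OF assms(1)] by (simp_all add: nth_splice_at)
  show ?thesis
    unfolding first_meet_def
  proof (rule Least_equality)
    show "splice_at a P Q ! a = splice_at a Q P ! a"
      using nth nth_first_meet[OF assms(1)] by (simp add: a_def)
    show "a \<le> k" if "splice_at a P Q ! k = splice_at a Q P ! k" for k
      using that nth[of k] before_first_meet[of k P Q] by (auto simp: a_def split: if_splits)
  qed
qed

lemma swap_tails_involutive: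
  assumes "meets n P Q" "length P = Suc n" "length Q = Suc n"
  shows "swap_tails (swap_tails (P, Q, R)) = (P, Q, R)"
  using first_meet_splice_at[OF assms] first_meet_le_bound[OF assms(1)] assms(2,3)
  by (simp add: first_meet_sym[of "splice_at _ Q P"] splice_at_splice_at)

lemma splice_at_first_meet_chain_to_outer:
  assumes len: "length P = Suc n" "length Q = Suc n"
    and "meets n P Q" "meets n Q R" "\<not> meets n P R" "first_meet P Q < first_meet Q R"
  defines "a \<equiv> first_meet P Q"
  shows "meets n (splice_at a P Q) R" "\<not> meets n (splice_at a Q P) R"
proof -
  have nth: "splice_at a P Q ! k = (if k < a then P ! k else Q ! k)"
            "splice_at a Q P ! k = (if k < a then Q ! k else P ! k)" for k
    using len first_meet_le_bound[OF assms(3)] by (simp_all add: a_def nth_splice_at)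
  show "meets n (splice_at a P Q) R"
    using nth nth_first_meet[OF assms(4)] first_meet_le_bound[OF assms(4)] assms(6)
    unfolding meets_def a_def by (metis not_less_iff_gr_or_eq)
  show "\<not> meets n (splice_at a Q P) R"
    using nth before_first_meet[of _ Q R] assms(5,6) unfolding meets_def a_def
    by (metis order.strict_trans)
qed

lemma splice_at_first_meet_outer_to_chain:
  assumes len: "length P = Suc n" "length Q = Suc n"
    and "meets n P R" "\<not> meets n Q R"
    and shield: "\<And>c. c \<le> n \<Longrightarrow> P ! c = R ! c \<Longrightarrow> \<exists>k\<le>c. P ! k = Q ! k"
  defines "a \<equiv> first_meet P Q"
  shows "meets n P Q" "meets n (splice_at a P Q) (splice_at a Q P)"
    "meets n (splice_at a Q P) R" "\<not> meets n (splice_at a P Q) R"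
    "first_meet (splice_at a P Q) (splice_at a Q P) < first_meet (splice_at a Q P) R"
proof -
  obtain c where c: "c \<le> n" "P ! c = R ! c" using assms(3) meets_def by auto
  then obtain k where k: "k \<le> c" "P ! k = Q ! k" using shield by blast
  show PQ: "meets n P Q" using c k unfolding meets_def by (meson order_trans)
  note a_le = first_meet_le_bound[OF PQ, folded a_def]
  have nth: "splice_at a P Q ! k = (if k < a then P ! k else Q ! k)"
            "splice_at a Q P ! k = (if k < a then Q ! k else P ! k)" for k
    using len a_le by (simp_all add: nth_splice_at)
  have first: "first_meet (splice_at a P Q) (splice_at a Q P) = a"
    using first_meet_splice_at[OF PQ len] by (simp add: a_def)
  have "a \<le> c" using first_meet_le[OF k(2)] k(1) by (simp add: a_def)
  moreover have "a \<noteq> c"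
    using nth_first_meet[OF PQ] c assms(4) unfolding meets_def a_def by metis
  ultimately have "a < c" by simp
  show "meets n (splice_at a P Q) (splice_at a Q P)"
    using a_le nth nth_first_meet[OF PQ] unfolding meets_def a_def by auto
  show QR': "meets n (splice_at a Q P) R"
    using nth c \<open>a < c\<close> unfolding meets_def by (metis not_less_iff_gr_or_eq)
  show "\<not> meets n (splice_at a P Q) R"
  proof
    assume "meets n (splice_at a P Q) R"
    then obtain m where m: "m \<le> n" "splice_at a P Q ! m = R ! m" by (auto simp: meets_def)
    show False
    proof (cases "m < a")
      case True
      then obtain k where "k \<le> m" "P ! k = Q ! k" using m nth shield by metis
      then show False using True before_first_meet[of k P Q] by (simp add: a_def)
    next
      case False
      then show False using m nth assms(4) by (auto simp: meets_def)
    qed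
  qed
  have "a < first_meet (splice_at a Q P) R"
  proof (rule ccontr)
    assume "\<not> ?thesis"
    then have "Q ! first_meet (splice_at a Q P) R = R ! first_meet (splice_at a Q P) R"
      using nth_first_meet[OF QR'] nth nth_first_meet[OF PQ]
      by (metis a_def nat_less_le not_le)
    then show False
      using assms(4) first_meet_le_bound[OF QR'] by (auto simp: meets_def)
  qed
  then show "first_meet (splice_at a P Q) (splice_at a Q P) < first_meet (splice_at a Q P) R"
    by (simp add: first)
qed

lemma card_meets_chain_eq_card_meets_outer:
  fixes p q r :: int and n :: nat
  assumes "even p" "even q" "even r" "p < q \<and> q < r \<or> r < q \<and> q < p"
  defines "S \<equiv> walks (0, p) n \<times> walks (0, q) n \<times> walks (0, r) n"
  shows "card {(P, Q, R) \<in> S. meets n P Q \<and> meets n Q R \<and> \<not> meets n P R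
                              \<and> first_meet P Q < first_meet Q R}
       = card {(P, Q, R) \<in> S. meets n P R \<and> \<not> meets n Q R}"
    (is "card ?X = card ?Y")
proof (rule bij_betw_same_card, rule bij_betw_byWitness[where f' = swap_tails])
  have walks: "lattice_walk (0, p) n P" "lattice_walk (0, q) n Q" "lattice_walk (0, r) n R"
    if "(P, Q, R) \<in> S" for P Q R
    using that by (auto simp: S_def walks_def)
  have len: "length P = Suc n" "length Q = Suc n" if "(P, Q, R) \<in> S" for P Q R
    using walks[OF that] by (simp_all add: lattice_walk_length)
  have swap_mem: "swap_tails (P, Q, R) \<in> S" if "(P, Q, R) \<in> S" "meets n P Q" for P Q R
    using lattice_walk_splice_at[OF walks(1,2)[OF that(1)]]
      lattice_walk_splice_at[OF walks(2,1)[OF that(1)]]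
      first_meet_le_bound[OF that(2)] nth_first_meet[OF that(2)] walks(3)[OF that(1)]
    by (simp add: S_def walks_def)
  have involutive: "swap_tails (swap_tails (P, Q, R)) = (P, Q, R)"
    if "(P, Q, R) \<in> S" "meets n P Q" for P Q R
    using swap_tails_involutive[OF that(2) len[OF that(1)]] .
  show "swap_tails ` ?X \<subseteq> ?Y"
    using swap_mem splice_at_first_meet_chain_to_outer len by auto
  have shield: "\<exists>k\<le>c. P ! k = Q ! k"
    if "(P, Q, R) \<in> S" "\<not> meets n Q R" "c \<le> n" "P ! c = R ! c" for P Q R c
    using middle_walk_meets[OF walks[OF that(1)] assms(1-4) that(3,4)] that(2,3)
    unfolding meets_def by (meson order_trans)
  have chain: "meets n P Q \<and> swap_tails (P, Q, R) \<in> ?X"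
    if "(P, Q, R) \<in> S" "meets n P R" "\<not> meets n Q R" for P Q R
    using splice_at_first_meet_outer_to_chain[OF len[OF that(1)] that(2,3) shield[OF that(1,3)]]
      swap_mem[OF that(1)] by auto
  show "\<forall>t\<in>?X. swap_tails (swap_tails t) = t" "\<forall>t\<in>?Y. swap_tails (swap_tails t) = t"
    using involutive chain by auto
  show "swap_tails ` ?Y \<subseteq> ?X"
    using chain by auto
qed

lemma card_triples_reverse:
  "card {(P, Q, R) \<in> A \<times> B \<times> C. f P Q R} = card {(R, Q, P) \<in> C \<times> B \<times> A. f P Q R}"
  by (rule bij_betw_same_card[where f = "\<lambda>(P, Q, R). (R, Q, P)"])
     (auto intro!: bij_betw_byWitness[where f' = "\<lambda>(P, Q, R). (R, Q, P)"])

lemma card_triples_split: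
  assumes "finite S"
  shows "card {(P, Q, R) \<in> S. f P Q R}
       = card {(P, Q, R) \<in> S. f P Q R \<and> g P Q R} + card {(P, Q, R) \<in> S. f P Q R \<and> \<not> g P Q R}"
proof -
  have "{(P, Q, R) \<in> S. f P Q R}
      = {(P, Q, R) \<in> S. f P Q R \<and> g P Q R} \<union> {(P, Q, R) \<in> S. f P Q R \<and> \<not> g P Q R}"
    by auto
  moreover have "finite {(P, Q, R) \<in> S. f P Q R \<and> g P Q R}"
    "finite {(P, Q, R) \<in> S. f P Q R \<and> \<not> g P Q R}"
    using assms by (auto elim: rev_finite_subset)
  ultimately show ?thesis by (simp add: card_Un_disjoint disjoint_iff)
qed

lemma card_meets_both_eq_card_meets_outer:
  fixes p q r :: int and n :: nat
  assumes "even p" "even q" "even r" "p < q" "q < r"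
  defines "S \<equiv> walks (0, p) n \<times> walks (0, q) n \<times> walks (0, r) n"
  shows "card {(P, Q, R) \<in> S. meets n P Q \<and> meets n Q R} = card {(P, Q, R) \<in> S. meets n P R}"
proof -
  define S' where "S' = walks (0, r) n \<times> walks (0, q) n \<times> walks (0, p) n"
  have fin: "finite S" by (simp add: S_def finite_walks)
  have between: "meets n P Q \<or> meets n Q R" if "(P, Q, R) \<in> S" "meets n P R" for P Q R
    using meets_outer_imp_meets_middle[of p n P q Q r R] that assms(1-5)
    by (auto simp: S_def walks_def)
  let ?all = "{(P, Q, R) \<in> S. meets n P Q \<and> meets n Q R \<and> meets n P R}"
  let ?left = "{(P, Q, R) \<in> S. meets n P R \<and> \<not> meets n P Q}"
  let ?right = "{(P, Q, R) \<in> S. meets n P R \<and> \<not> meets n Q R}"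
  let ?chain = "{(P, Q, R) \<in> S. meets n P Q \<and> meets n Q R \<and> \<not> meets n P R
                               \<and> first_meet P Q < first_meet Q R}"
  let ?chain' = "{(P, Q, R) \<in> S. meets n P Q \<and> meets n Q R \<and> \<not> meets n P R
                                \<and> \<not> first_meet P Q < first_meet Q R}"
  have "card {(P, Q, R) \<in> S. meets n P Q \<and> meets n Q R} = card ?all + card ?chain + card ?chain'"
    using card_triples_split[OF fin, of "\<lambda>P Q R. meets n P Q \<and> meets n Q R" "\<lambda>P Q R. meets n P R"]
      card_triples_split[OF fin, of "\<lambda>P Q R. meets n P Q \<and> meets n Q R \<and> \<not> meets n P R"
        "\<lambda>P Q R. first_meet P Q < first_meet Q R"]
    by (simp only: conj_assoc)
  also have "card ?chain = card ?right"
    using card_meets_chain_eq_card_meets_outer[of p q r n] assms(1-5) by (simp add: S_def)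
  also have "?chain' = {(P, Q, R) \<in> S. meets n P Q \<and> meets n Q R \<and> \<not> meets n P R
                                    \<and> first_meet Q R < first_meet P Q}"
    using first_meet_neq by (auto simp: not_less order.order_iff_strict) metis
  also have "card \<dots> = card {(P, Q, R) \<in> S'. meets n P Q \<and> meets n Q R \<and> \<not> meets n P R
                                          \<and> first_meet P Q < first_meet Q R}"
    unfolding S_def S'_def
    by (subst card_triples_reverse) (simp add: meets_sym first_meet_sym conj_ac)
  also have "\<dots> = card {(P, Q, R) \<in> S'. meets n P R \<and> \<not> meets n Q R}"
    using card_meets_chain_eq_card_meets_outer[of r q p n] assms(1-5) by (simp add: S'_def)
  also have "\<dots> = card ?left"
    unfolding S_def S'_def
    by (subst card_triples_reverse) (simp add: meets_sym)
  also have "card ?all + card ?right + card ?left = card {(P, Q, R) \<in> S. meets n P R}"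
  proof -
    have "?left = {(P, Q, R) \<in> S. meets n P R \<and> meets n Q R \<and> \<not> meets n P Q}"
      using between by auto
    moreover have "?all = {(P, Q, R) \<in> S. meets n P R \<and> meets n Q R \<and> meets n P Q}"
      by auto
    ultimately show ?thesis
      using card_triples_split[OF fin, of "\<lambda>P Q R. meets n P R" "\<lambda>P Q R. meets n Q R"]
        card_triples_split[OF fin, of "\<lambda>P Q R. meets n P R \<and> meets n Q R" "\<lambda>P Q R. meets n P Q"]
      by (simp only: conj_assoc)
  qed
  finally show ?thesis .
qed

lemma card_V_add_card_W13:
  assumes "i \<ge> 1" "j \<ge> 1"
  shows "card (V i j n) + card (W13 i j n) = card (W12 i j n) + card (W23 i j n)"
proof -
  define S where "S = U i j n"
  have fin: "finite S" by (simp add: S_def U_eq_walks finite_walks)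
  have walks: "lattice_walk (0, 0) n P" "lattice_walk (0, 2 * int i) n Q"
    "lattice_walk (0, 2 * int i + 2 * int j) n R" if "(P, Q, R) \<in> S" for P Q R
    using that by (auto simp: S_def U_def)
  have between: "meets n P Q \<or> meets n Q R" if "(P, Q, R) \<in> S" "meets n P R" for P Q R
    using meets_outer_imp_meets_middle[OF walks[OF that(1)]] that(2) assms by simp
  let ?both = "{(P, Q, R) \<in> S. meets n P Q \<and> meets n Q R}"
  let ?outer = "{(P, Q, R) \<in> S. meets n P R}"
  have W12: "W12 i j n = {(P, Q, R) \<in> S. \<not> meets n P Q}"
    unfolding W12_def S_def[symmetric] using walks nonintersecting_iff_not_meets by blast
  have W23: "W23 i j n = {(P, Q, R) \<in> S. \<not> meets n Q R}"
    unfolding W23_def S_def[symmetric] using walks nonintersecting_iff_not_meets by blast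
  have W13: "W13 i j n = S - ?outer"
    unfolding W13_def S_def[symmetric] using walks nonintersecting_iff_not_meets by blast
  have V: "V i j n = W12 i j n \<inter> W23 i j n"
    unfolding V_def W12 W23 S_def[symmetric] using walks nonintersecting_iff_not_meets between
    by blast
  have fin_W: "finite (W12 i j n)" "finite (W23 i j n)"
    using fin unfolding W12 W23 by (auto elim: rev_finite_subset)
  have "W12 i j n \<union> W23 i j n = S - ?both"
    unfolding W12 W23 by auto
  then have "card (W12 i j n) + card (W23 i j n) = card (S - ?both) + card (V i j n)"
    using card_Un_Int[OF fin_W] by (simp add: V)
  also have "card (S - ?both) = card (S - ?outer)"
  proof -
    have "card ?both = card ?outer"
      using card_meets_both_eq_card_meets_outer[of 0 "2 * int i" "2 * int i + 2 * int j" n] assms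
      by (simp add: S_def U_eq_walks)
    moreover have "?both \<subseteq> S" "?outer \<subseteq> S" by auto
    ultimately show ?thesis
      using fin by (simp add: card_Diff_subset finite_subset)
  qed
  finally show ?thesis by (simp add: W13)
qed

theorem proposition2p2:
  fixes i j :: nat
  assumes "i \<ge> 1" and "j \<ge> 1"
  shows "gf (V i j) = gf (W12 i j) + gf (W23 i j) - gf (W13 i j)"
proof (rule fps_ext)
  fix n
  have "int (card (V i j n)) + int (card (W13 i j n)) = int (card (W12 i j n)) + int (card (W23 i j n))"
    using card_V_add_card_W13[OF assms, of n] by (metis of_nat_add)
  then show "fps_nth (gf (V i j)) n = fps_nth (gf (W12 i j) + gf (W23 i j) - gf (W13 i j)) n"
    by (simp add: gf_def)
qed

end
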